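(* Under the standing setup, for every $L\in\mathbb N$, $$\mathrm P\Big[\lim_{n\to\infty}W_n=0\,\Big|\,W_0=L\Big]\le q_W^{\,L},$$ where $(W_n)_n$ is the weakest-first process and $q_W=\mathrm P[\lim_nW_n=0\mid W_0=1]$.
   Context: Standing setup. On a probability space $(\Omega,\mathcal F,\mathrm P)$ there are three mutually independent double arrays $(D_n^k)_{n\ge0,k\ge1}$, $(X_n^k)_{n\ge0,k\ge1}$, $(R_n^k)_{n\ge0,k\ge1}$, each consisting of i.i.d. random variables: $D_n^k\in\{0,1,2,\dots\}$ with law $p_j=\mathrm P[D_n^k=j]$ and mean $m$; $X_n^k\ge0$ real-valued with continuous distribution function $F$ and mean $\mu$; $R_n^k\ge0$ real-valued with mean $r$. Standing assumptions: (A1) $1<m<\infty$, $r<\infty$, $0<\mu<\infty$; (A2) $p_0>0$ and $p_k>0$ for some $k\ge2$; (A3) for the process under consideration started at $1$, every finite positive state is reached with positive probability; (A4) $D_n^k,X_n^k,R_n^k$ have finite variances. Write $D_n(k)=\sum_{j=1}^kD_n^j$, $R_n(k)=\sum_{j=1}^kR_n^j$. For $(x_k)_{k=1}^t$ let $x_{1,t}\le\dots\le x_{t,t}$ be its order statistics. The weakest-first counting function is $N(0,\varnothing,s)=0$ and, for $t\ge1$, $N(t,(x_k)_{k=1}^t,s)=0$ if $x_{1,t}>s$, otherwise $\max\{1\le k\le t:\sum_{j=1}^kx_{j,t}\le s\}$. The weakest-first process (wf-process) started at $L$ is $W_0=L$, $W_{n+1}=N\big(D_n(W_n),(X_n^k)_{k=1}^{D_n(W_n)},R_n(W_n)\big)$.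 *)

theory Defs
  imports "HOL-Probability.Probability"
begin

text \<open>The family (x_k) is given as a function x :: nat => real, of which only
  x 1, ..., x t are used.  ys is the list of order statistics x_{1,t} <= ... <= x_{t,t}.\<close>
definition wf_count :: "nat \<Rightarrow> (nat \<Rightarrow> real) \<Rightarrow> real \<Rightarrow> nat" where
  "wf_count t x s =
     (let ys = sort (map x [1..<t+1]) in
      if t = 0 then 0
      else if ys ! 0 > s then 0
      else Max {k. 1 \<le> k \<and> k \<le> t \<and> sum_list (take k ys) \<le> s})"

definition Dsum :: "(nat \<Rightarrow> nat \<Rightarrow> 'a \<Rightarrow> nat) \<Rightarrow> nat \<Rightarrow> nat \<Rightarrow> 'a \<Rightarrow> nat" where
  "Dsum D n k \<omega> = (\<Sum>j=1..k. D n j \<omega>)"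

definition Rsum :: "(nat \<Rightarrow> nat \<Rightarrow> 'a \<Rightarrow> real) \<Rightarrow> nat \<Rightarrow> nat \<Rightarrow> 'a \<Rightarrow> real" where
  "Rsum R n k \<omega> = (\<Sum>j=1..k. R n j \<omega>)"

primrec wf_proc :: "(nat \<Rightarrow> nat \<Rightarrow> 'a \<Rightarrow> nat) \<Rightarrow> (nat \<Rightarrow> nat \<Rightarrow> 'a \<Rightarrow> real) \<Rightarrow>
    (nat \<Rightarrow> nat \<Rightarrow> 'a \<Rightarrow> real) \<Rightarrow> nat \<Rightarrow> nat \<Rightarrow> 'a \<Rightarrow> nat" where
  "wf_proc D X R L 0 \<omega> = L"
| "wf_proc D X R L (Suc n) \<omega> =
     wf_count (Dsum D n (wf_proc D X R L n \<omega>) \<omega>) (\<lambda>k. X n k \<omega>)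
              (Rsum R n (wf_proc D X R L n \<omega>) \<omega>)"

definition all_vars :: "(nat \<Rightarrow> nat \<Rightarrow> 'a \<Rightarrow> nat) \<Rightarrow> (nat \<Rightarrow> nat \<Rightarrow> 'a \<Rightarrow> real) \<Rightarrow>
    (nat \<Rightarrow> nat \<Rightarrow> 'a \<Rightarrow> real) \<Rightarrow> nat \<times> nat \<times> nat \<Rightarrow> 'a \<Rightarrow> real" where
  "all_vars D X R i \<omega> =
     (case i of (c, n, k) \<Rightarrow> if c = 0 then real (D n k \<omega>) else if c = 1 then X n k \<omega> else R n k \<omega>)"

definition var_index :: "(nat \<times> nat \<times> nat) set" where
  "var_index = {(c, n, k). c \<le> 2 \<and> 1 \<le> k}"

end

theory Submission
  imports Defs
begin

text \<open>Weakest-first counting is superadditive: a feasible set of children chosen in one block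
  and paid from one block of resources, together with a feasible set chosen in a disjoint block
  and paid from a disjoint block of resources, is feasible for the union.  Hence the process
  started from \<open>a + b\<close> individuals dominates the sum of two processes started from \<open>a\<close> and
  from \<open>b\<close> that are driven by disjoint, hence independent, parts of the randomness.  The
  probability of extinction by time \<open>n\<close> is therefore submultiplicative in the initial
  population, so it is at most its value for one individual raised to the power \<open>L\<close>; let
  \<open>n \<rightarrow> \<infinity>\<close>.\<close>

subsection \<open>The weakest-first count as a maximal feasible cardinality\<close>

lemma sum_list_take_le_sum_mset:
  fixes ys :: "real list"
  shows "sorted ys \<Longrightarrow> T \<subseteq># mset ys \<Longrightarrow> size T = k \<Longrightarrow> sum_list (take k ys) \<le> sum_mset T"
proof (induction ys arbitrary: T k)
  case Nil
  then show ?case by simp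
next
  case (Cons y ys)
  show ?case
  proof (cases k)
    case 0
    then show ?thesis using Cons by simp
  next
    case (Suc k')
    show ?thesis
    proof (cases "y \<in># T")
      case True
      define T' where "T' = T - {#y#}"
      have T: "T = add_mset y T'" using True T'_def by simp
      have "T' \<subseteq># mset ys" using Cons.prems(2) T by simp
      moreover have "size T' = k'" using Cons.prems(3) T Suc by simp
      ultimately have "sum_list (take k' ys) \<le> sum_mset T'" using Cons by simp
      then show ?thesis using T Suc by simp
    next
      case False
      have sub: "T \<subseteq># mset ys" using Cons.prems(2) False
        by (metis mset.simps(2) Diff_eq_empty_iff_mset minus_add_mset_if_not_in_lhs)
      obtain z where z: "z \<in># T" using Cons.prems(3) Suc by (metis size_eq_Suc_imp_elem)
      define T' where "T' = T - {#z#}"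
      have T: "T = add_mset z T'" using z T'_def by simp
      have "T' \<subseteq># mset ys"
        using sub T by (metis add_mset_remove_trivial diff_subset_eq_self subset_mset.trans)
      moreover have "size T' = k'" using Cons.prems(3) T Suc by simp
      ultimately have "sum_list (take k' ys) \<le> sum_mset T'" using Cons by simp
      moreover have "y \<le> z"
        using Cons.prems(1) sub z by (metis mset_subset_eqD set_mset_mset sorted_simps(2))
      ultimately show ?thesis using T Suc by simp
    qed
  qed
qed

lemma ex_subset_image_mset_mset_set_eq:
  "finite A \<Longrightarrow> T \<subseteq># image_mset x (mset_set A) \<Longrightarrow> \<exists>S\<subseteq>A. image_mset x (mset_set S) = T"
proof (induction A arbitrary: T rule: finite_induct)
  case empty
  then show ?case by simp
next
  case (insert a A)
  have im: "image_mset x (mset_set (insert a A)) = add_mset (x a) (image_mset x (mset_set A))"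
    using insert by simp
  show ?case
  proof (cases "x a \<in># T")
    case True
    have "T - {#x a#} \<subseteq># image_mset x (mset_set A)"
      using insert.prems im True by (metis insert_DiffM add_mset_remove_trivial insert_subset_eq_iff)
    then obtain S where S: "S \<subseteq> A" "image_mset x (mset_set S) = T - {#x a#}"
      using insert.IH by blast
    have "finite S" "a \<notin> S" using S insert.hyps finite_subset by blast+
    then have "image_mset x (mset_set (insert a S)) = T" using S True by simp
    then show ?thesis using S by blast
  next
    case False
    have "T \<subseteq># image_mset x (mset_set A)" using insert.prems im False
      by (metis Diff_eq_empty_iff_mset minus_add_mset_if_not_in_lhs)
    then show ?thesis using insert.IH by blast
  qed
qed

lemma mset_sort_map_upt: "mset (sort (map x [1..<t+1])) = image_mset x (mset_set {1..t})"
proof -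
  have "mset (sort (map x [1..<t+1])) = image_mset x (mset_set {1..<t+1})"
    by (simp only: mset_sort mset_map mset_upt)
  also have "{1..<t+1} = {1..t}" by auto
  finally show ?thesis .
qed

lemma sum_list_take_sort_le_sum:
  fixes x :: "nat \<Rightarrow> real"
  assumes S: "S \<subseteq> {1..t}"
  shows "sum_list (take (card S) (sort (map x [1..<t+1]))) \<le> sum x S"
proof -
  have "finite S" using S finite_subset by blast
  have "image_mset x (mset_set S) \<subseteq># mset (sort (map x [1..<t+1]))"
    unfolding mset_sort_map_upt using S \<open>finite S\<close>
    by (intro image_mset_subseteq_mono) (simp add: msubset_mset_set_iff)
  then have "sum_list (take (card S) (sort (map x [1..<t+1]))) \<le> sum_mset (image_mset x (mset_set S))"
    using \<open>finite S\<close> by (intro sum_list_take_le_sum_mset) simp_all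
  also have "\<dots> = sum x S" by (simp add: sum_unfold_sum_mset)
  finally show ?thesis .
qed

lemma ex_subset_sum_eq_sum_list_take_sort:
  fixes x :: "nat \<Rightarrow> real"
  assumes "k \<le> t"
  shows "\<exists>S\<subseteq>{1..t}. card S = k \<and> sum x S = sum_list (take k (sort (map x [1..<t+1])))"
proof -
  let ?ys = "sort (map x [1..<t+1])"
  have "mset (take k ?ys) \<subseteq># image_mset x (mset_set {1..t})"
    unfolding mset_sort_map_upt[symmetric]
    by (metis append_take_drop_id mset_append mset_subset_eq_add_left)
  then obtain S where S: "S \<subseteq> {1..t}" "image_mset x (mset_set S) = mset (take k ?ys)"
    using ex_subset_image_mset_mset_set_eq[of "{1..t}"] by blast
  have "finite S" using S(1) finite_subset by blast
  then have "card S = size (image_mset x (mset_set S))" by simp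
  also have "\<dots> = k" using S(2) assms by simp
  finally show ?thesis
    using S by (metis sum_mset_sum_list sum_unfold_sum_mset)
qed

lemma wf_count_maximal:
  fixes x :: "nat \<Rightarrow> real"
  assumes x_nonneg: "\<And>k. 0 \<le> x k" and S: "S \<subseteq> {1..t}" and sum_le: "sum x S \<le> s"
  shows "card S \<le> wf_count t x s"
proof (cases "card S")
  case 0
  then show ?thesis by simp
next
  case (Suc k)
  define ys where "ys = sort (map x [1..<t+1])"
  define K where "K = {k. 1 \<le> k \<and> k \<le> t \<and> sum_list (take k ys) \<le> s}"
  have "card S \<le> t" using card_mono[OF _ S] by simp
  moreover have "length ys = t" unfolding ys_def by simp
  ultimately have take_S: "take (card S) ys = ys ! 0 # take k (tl ys)"
    using Suc by (cases ys) auto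
  have "set ys \<subseteq> range x" unfolding ys_def by auto
  moreover have "set (tl ys) \<subseteq> set ys" by (cases ys) auto
  ultimately have "set (take k (tl ys)) \<subseteq> range x" using set_take_subset[of k "tl ys"] by (meson subset_trans)
  then have "0 \<le> sum_list (take k (tl ys))" using x_nonneg by (intro sum_list_nonneg) auto
  moreover have "sum_list (take (card S) ys) \<le> s"
    using sum_list_take_sort_le_sum[OF S, of x] sum_le unfolding ys_def by linarith
  ultimately have "\<not> ys ! 0 > s" "card S \<in> K"
    using take_S Suc \<open>card S \<le> t\<close> unfolding K_def by auto
  then have "wf_count t x s = Max K"
    using Suc \<open>card S \<le> t\<close> unfolding wf_count_def ys_def[symmetric] K_def by simp
  with \<open>card S \<in> K\<close> show ?thesis unfolding K_def by simp
qed

lemma wf_count_attained: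
  fixes x :: "nat \<Rightarrow> real"
  assumes "0 \<le> s"
  obtains S where "S \<subseteq> {1..t}" "card S = wf_count t x s" "sum x S \<le> s"
proof -
  define ys where "ys = sort (map x [1..<t+1])"
  define K where "K = {k. 1 \<le> k \<and> k \<le> t \<and> sum_list (take k ys) \<le> s}"
  show thesis
  proof (cases "t = 0 \<or> ys ! 0 > s")
    case True
    then have "wf_count t x s = 0" unfolding wf_count_def ys_def[symmetric] by auto
    then show ?thesis using that[of "{}"] assms by simp
  next
    case False
    then have "wf_count t x s = Max K" unfolding wf_count_def ys_def[symmetric] K_def by simp
    have "length ys = t" unfolding ys_def by simp
    then have "take 1 ys = [ys ! 0]" using False by (cases ys) auto
    then have "1 \<in> K" using False unfolding K_def by simp
    then have "Max K \<in> K" unfolding K_def by (intro Max_in) auto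
    then have "Max K \<le> t" unfolding K_def by simp
    then obtain S where "S \<subseteq> {1..t}" "card S = Max K" "sum x S = sum_list (take (Max K) ys)"
      using ex_subset_sum_eq_sum_list_take_sort[of "Max K" t x] unfolding ys_def[symmetric] by blast
    then show ?thesis
      using that \<open>Max K \<in> K\<close> \<open>wf_count t x s = Max K\<close> unfolding K_def by auto
  qed
qed

lemma wf_count_eq_iff:
  fixes x :: "nat \<Rightarrow> real"
  assumes "\<And>k. 0 \<le> x k" "0 \<le> s"
  shows "wf_count t x s = n \<longleftrightarrow>
    (\<exists>S\<in>Pow {1..t}. card S = n \<and> sum x S \<le> s) \<and> (\<forall>S\<in>Pow {1..t}. sum x S \<le> s \<longrightarrow> card S \<le> n)"
proof -
  obtain S0 where S0: "S0 \<subseteq> {1..t}" "card S0 = wf_count t x s" "sum x S0 \<le> s"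
    using wf_count_attained[OF assms(2)] by blast
  note maximal = wf_count_maximal[OF assms(1)]
  show ?thesis
  proof
    assume "wf_count t x s = n"
    then show "(\<exists>S\<in>Pow {1..t}. card S = n \<and> sum x S \<le> s) \<and>
        (\<forall>S\<in>Pow {1..t}. sum x S \<le> s \<longrightarrow> card S \<le> n)"
      using S0 maximal by auto
  next
    assume "(\<exists>S\<in>Pow {1..t}. card S = n \<and> sum x S \<le> s) \<and>
        (\<forall>S\<in>Pow {1..t}. sum x S \<le> s \<longrightarrow> card S \<le> n)"
    then have "n \<le> wf_count t x s" "wf_count t x s \<le> n" using S0 maximal by auto
    then show "wf_count t x s = n" by simp
  qed
qed

lemma wf_count_cong:
  assumes "\<And>k. k \<in> {1..t} \<Longrightarrow> x k = y k"
  shows "wf_count t x s = wf_count t y s"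
proof -
  have "map x [1..<t+1] = map y [1..<t+1]" using assms by (intro map_cong) auto
  then show ?thesis unfolding wf_count_def by (simp only:)
qed

lemma wf_count_superadd:
  fixes x :: "nat \<Rightarrow> real"
  assumes x_nonneg: "\<And>k. 0 \<le> x k" and "0 \<le> s1" "0 \<le> s2" "t1 + t2 \<le> t" "s1 + s2 \<le> s"
  shows "wf_count t1 x s1 + wf_count t2 (\<lambda>k. x (k + t1)) s2 \<le> wf_count t x s"
proof -
  obtain S1 where S1: "S1 \<subseteq> {1..t1}" "card S1 = wf_count t1 x s1" "sum x S1 \<le> s1"
    using wf_count_attained[OF \<open>0 \<le> s1\<close>] by blast
  obtain S2 where S2: "S2 \<subseteq> {1..t2}" "card S2 = wf_count t2 (\<lambda>k. x (k + t1)) s2"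
      "sum (\<lambda>k. x (k + t1)) S2 \<le> s2"
    using wf_count_attained[OF \<open>0 \<le> s2\<close>] by blast
  define S2' where "S2' = (\<lambda>k. k + t1) ` S2"
  have inj: "inj_on (\<lambda>k. k + t1) S2" by (auto simp: inj_on_def)
  have S2': "S2' \<subseteq> {t1+1..t1+t2}" "card S2' = card S2" "sum x S2' = sum (\<lambda>k. x (k + t1)) S2"
    using S2(1) inj unfolding S2'_def by (auto simp: card_image sum.reindex)
  have disj: "S1 \<inter> S2' = {}" and fin: "finite S1" "finite S2'"
    using S1(1) S2'(1) finite_subset by fastforce+
  have "sum x (S1 \<union> S2') \<le> s"
    using S1(3) S2(3) S2'(3) assms disj fin by (simp add: sum.union_disjoint)
  moreover have "S1 \<union> S2' \<subseteq> {1..t}" using S1(1) S2'(1) assms by auto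
  ultimately have "card (S1 \<union> S2') \<le> wf_count t x s" by (rule wf_count_maximal[OF x_nonneg, rotated])
  then show ?thesis using S1(2) S2(2) S2'(2) disj fin by (simp add: card_Un_disjoint)
qed

subsection \<open>One generation as a function of a canonical sample\<close>

text \<open>A sample \<open>(d, x, r)\<close> lists, from index 0 on, the offspring numbers, costs and resources
  available to one generation.  Offspring numbers are stored as reals (read back via
  \<open>nat \<lfloor>_\<rfloor>\<close>) and costs and resources are clipped at 0, so that every sample is meaningful.
  The \<open>w\<close> parents consume \<open>d\<close> and \<open>r\<close> at indices \<open>< w\<close>, and their children consume \<open>x\<close> at
  indices \<open>< step_children w e\<close>; \<open>step_costs\<close> shifts these to the indices \<open>1, 2, \<dots>\<close> used by
  \<open>wf_count\<close>.\<close>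

type_synonym step_sample = "(nat \<Rightarrow> real) \<times> (nat \<Rightarrow> real) \<times> (nat \<Rightarrow> real)"

definition step_children :: "nat \<Rightarrow> step_sample \<Rightarrow> nat" where
  "step_children w e = (\<Sum>j<w. nat \<lfloor>fst e j\<rfloor>)"

definition step_resources :: "nat \<Rightarrow> step_sample \<Rightarrow> real" where
  "step_resources w e = (\<Sum>j<w. max 0 (snd (snd e) j))"

definition step_costs :: "step_sample \<Rightarrow> nat \<Rightarrow> real" where
  "step_costs e k = max 0 (fst (snd e) (k - 1))"

definition wf_step :: "nat \<Rightarrow> step_sample \<Rightarrow> nat" where
  "wf_step w e = wf_count (step_children w e) (step_costs e) (step_resources w e)"

definition shift_seq :: "nat \<Rightarrow> (nat \<Rightarrow> 'b) \<Rightarrow> nat \<Rightarrow> 'b" where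
  "shift_seq k f = (\<lambda>i. f (i + k))"

text \<open>The part of a sample left unused by the first \<open>a\<close> parents.\<close>

definition shift_sample :: "nat \<Rightarrow> step_sample \<Rightarrow> step_sample" where
  "shift_sample a e =
     (shift_seq a (fst e), shift_seq (step_children a e) (fst (snd e)), shift_seq a (snd (snd e)))"

lemma sum_lessThan_add:
  fixes f :: "nat \<Rightarrow> 'b::comm_monoid_add"
  shows "(\<Sum>j<a+b. f j) = (\<Sum>j<a. f j) + (\<Sum>j<b. f (j + a))"
  by (induction b) (simp_all add: ac_simps)

lemma wf_step_superadd: "wf_step a e + wf_step b (shift_sample a e) \<le> wf_step (a + b) e"
proof -
  let ?e' = "shift_sample a e"
  have children: "step_children (a + b) e = step_children a e + step_children b ?e'"
    unfolding step_children_def shift_sample_def shift_seq_def by (simp add: sum_lessThan_add)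
  have resources: "step_resources (a + b) e = step_resources a e + step_resources b ?e'"
    unfolding step_resources_def shift_sample_def shift_seq_def by (simp add: sum_lessThan_add)
  have costs: "wf_step b ?e' =
      wf_count (step_children b ?e') (\<lambda>k. step_costs e (k + step_children a e)) (step_resources b ?e')"
    unfolding wf_step_def
    by (rule wf_count_cong) (auto simp: step_costs_def shift_sample_def shift_seq_def Suc_diff_le)
  have "0 \<le> step_resources w e'" for w e' unfolding step_resources_def by (auto intro!: sum_nonneg)
  then show ?thesis
    unfolding costs unfolding wf_step_def children resources
    by (intro wf_count_superadd) (simp_all add: step_costs_def)
qed

lemma wf_step_mono: "a \<le> b \<Longrightarrow> wf_step a e \<le> wf_step b e"
  using wf_step_superadd[of a e "b - a"] by simp

lemma wf_step_local:
  assumes "\<And>i. i < a \<Longrightarrow> d i = d' i" "\<And>i. i < step_children a (d, x, r) \<Longrightarrow> x i = x' i"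
    "\<And>i. i < a \<Longrightarrow> r i = r' i"
  shows "wf_step a (d, x, r) = wf_step a (d', x', r')"
proof -
  have "step_children a (d, x, r) = step_children a (d', x', r')"
    unfolding step_children_def using assms(1) by (auto intro: sum.cong)
  moreover have "step_resources a (d, x, r) = step_resources a (d', x', r')"
    unfolding step_resources_def using assms(3) by (auto intro: sum.cong)
  moreover have "wf_count (step_children a (d, x, r)) (step_costs (d, x, r)) s
      = wf_count (step_children a (d, x, r)) (step_costs (d', x', r')) s" for s
    by (rule wf_count_cong) (auto simp: step_costs_def assms(2))
  ultimately show ?thesis unfolding wf_step_def by simp
qed

abbreviation seq_borel :: "(nat \<Rightarrow> real) measure" where
  "seq_borel \<equiv> PiM UNIV (\<lambda>_. borel)"

abbreviation sample_borel :: "step_sample measure" where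
  "sample_borel \<equiv> seq_borel \<Otimes>\<^sub>M (seq_borel \<Otimes>\<^sub>M seq_borel)"

lemma measurable_nat_floor[measurable]: "(\<lambda>x::real. nat \<lfloor>x\<rfloor>) \<in> measurable borel (count_space UNIV)"
  using measurable_compose[OF measurable_real_floor, of nat "count_space UNIV"] by simp

lemma measurable_step_children[measurable]:
  "step_children w \<in> measurable sample_borel (count_space UNIV)"
proof (induction w)
  case 0
  then show ?case by (simp add: step_children_def)
next
  case (Suc w)
  have "step_children (Suc w) = (\<lambda>e. (\<lambda>i e. i + nat \<lfloor>fst e w\<rfloor>) (step_children w e) e)"
    by (simp add: step_children_def fun_eq_iff)
  also have "\<dots> \<in> measurable sample_borel (count_space UNIV)"
    by (rule measurable_compose_countable[OF _ Suc]) measurable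
  finally show ?case .
qed

lemma measurable_step_resources[measurable]: "step_resources w \<in> borel_measurable sample_borel"
  unfolding step_resources_def by measurable

lemma measurable_step_costs[measurable]: "(\<lambda>e. step_costs e k) \<in> borel_measurable sample_borel"
  unfolding step_costs_def by measurable

lemma measurable_wf_count_step:
  "(\<lambda>e. wf_count t (step_costs e) (step_resources w e)) \<in> measurable sample_borel (count_space UNIV)"
proof (subst measurable_count_space_eq2_countable, intro conjI ballI)
  fix n
  have "wf_count t (step_costs e) (step_resources w e) = n \<longleftrightarrow>
      (\<exists>S\<in>Pow {1..t}. card S = n \<and> (\<Sum>k\<in>S. step_costs e k) \<le> step_resources w e) \<and>
      (\<forall>S\<in>Pow {1..t}. (\<Sum>k\<in>S. step_costs e k) \<le> step_resources w e \<longrightarrow> card S \<le> n)" for e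
    by (rule wf_count_eq_iff) (auto simp: step_costs_def step_resources_def intro!: sum_nonneg)
  then have "(\<lambda>e. wf_count t (step_costs e) (step_resources w e)) -` {n} \<inter> space sample_borel =
    {e \<in> space sample_borel.
      (\<exists>S\<in>Pow {1..t}. card S = n \<and> (\<Sum>k\<in>S. step_costs e k) \<le> step_resources w e) \<and>
      (\<forall>S\<in>Pow {1..t}. (\<Sum>k\<in>S. step_costs e k) \<le> step_resources w e \<longrightarrow> card S \<le> n)}"
    by blast
  also have "\<dots> \<in> sets sample_borel" by measurable
  finally show "(\<lambda>e. wf_count t (step_costs e) (step_resources w e)) -` {n} \<inter> space sample_borel
      \<in> sets sample_borel" .
qed simp

lemma measurable_wf_step[measurable]: "wf_step w \<in> measurable sample_borel (count_space UNIV)"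
proof -
  have "wf_step w = (\<lambda>e. (\<lambda>t e. wf_count t (step_costs e) (step_resources w e)) (step_children w e) e)"
    by (simp add: wf_step_def fun_eq_iff)
  also have "\<dots> \<in> measurable sample_borel (count_space UNIV)"
    by (rule measurable_compose_countable[OF measurable_wf_count_step measurable_step_children])
  finally show ?thesis .
qed

lemma measurable_shift_seq[measurable]:
  "shift_seq k \<in> measurable (PiM UNIV (\<lambda>_::nat. N)) (PiM UNIV (\<lambda>_::nat. N))"
  unfolding shift_seq_def by (rule measurable_PiM_single') (auto simp: space_PiM)

lemma measurable_shift_sample[measurable]: "shift_sample a \<in> measurable sample_borel sample_borel"
proof -
  have "shift_sample a = (\<lambda>e. (\<lambda>t e. (shift_seq a (fst e), shift_seq t (fst (snd e)),
      shift_seq a (snd (snd e)))) (step_children a e) e)"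
    by (simp add: shift_sample_def fun_eq_iff)
  also have "\<dots> \<in> measurable sample_borel sample_borel"
    by (rule measurable_compose_countable[OF _ measurable_step_children]) measurable
  finally show ?thesis .
qed

lemma prob_space_imp_sequence_space: "prob_space M \<Longrightarrow> sequence_space M"
  unfolding sequence_space_def product_prob_space_def product_prob_space_axioms_def
    product_sigma_finite_def
  by (auto intro: prob_space_imp_sigma_finite)

lemma (in sequence_space) nn_integral_mult_shift_seq:
  fixes F G :: "(nat \<Rightarrow> 'a) \<Rightarrow> ennreal"
  assumes F: "F \<in> borel_measurable S" and G: "G \<in> borel_measurable S"
    and F_local: "\<And>\<omega> \<omega>'. (\<And>i. i < m \<Longrightarrow> \<omega> i = \<omega>' i) \<Longrightarrow> F \<omega> = F \<omega>'"
  shows "(\<integral>\<^sup>+\<omega>. F \<omega> * G (shift_seq m \<omega>) \<partial>S) = (\<integral>\<^sup>+\<omega>. F \<omega> \<partial>S) * (\<integral>\<^sup>+\<omega>. G \<omega> \<partial>S)"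
proof -
  let ?H = "\<lambda>\<omega>. F \<omega> * G (shift_seq m \<omega>)"
  have H: "?H \<in> borel_measurable S" using F G by measurable
  have "(\<integral>\<^sup>+\<omega>. ?H \<omega> \<partial>S) = (\<integral>\<^sup>+\<omega>. ?H \<omega> \<partial>distr (S \<Otimes>\<^sub>M S) S (\<lambda>(\<omega>, \<omega>'). comb_seq m \<omega> \<omega>'))"
    by (simp add: PiM_comb_seq)
  also have "\<dots> = (\<integral>\<^sup>+p. ?H (comb_seq m (fst p) (snd p)) \<partial>(S \<Otimes>\<^sub>M S))"
    by (subst nn_integral_distr[OF measurable_comb_seq]) (simp_all add: H case_prod_beta)
  also have "\<dots> = (\<integral>\<^sup>+p. F (fst p) * G (snd p) \<partial>(S \<Otimes>\<^sub>M S))"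
  proof (rule nn_integral_cong)
    fix p :: "(nat \<Rightarrow> 'a) \<times> (nat \<Rightarrow> 'a)"
    have "F (comb_seq m (fst p) (snd p)) = F (fst p)" by (rule F_local) (simp add: comb_seq_less)
    moreover have "shift_seq m (comb_seq m (fst p) (snd p)) = snd p"
      by (simp add: shift_seq_def comb_seq_add fun_eq_iff)
    ultimately show "?H (comb_seq m (fst p) (snd p)) = F (fst p) * G (snd p)" by simp
  qed
  also have "\<dots> = (\<integral>\<^sup>+\<omega>. \<integral>\<^sup>+\<omega>'. F \<omega> * G \<omega>' \<partial>S \<partial>S)"
  proof -
    have "(\<lambda>p. F (fst p) * G (snd p)) \<in> borel_measurable (S \<Otimes>\<^sub>M S)" using F G by measurable
    from P.nn_integral_fst[OF this] show ?thesis by simp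
  qed
  also have "\<dots> = (\<integral>\<^sup>+\<omega>. F \<omega> \<partial>S) * (\<integral>\<^sup>+\<omega>. G \<omega> \<partial>S)"
    using F G by (simp add: nn_integral_cmult nn_integral_multc)
  finally show ?thesis .
qed

lemma (in sequence_space) nn_integral_case_nat:
  fixes H :: "(nat \<Rightarrow> 'a) \<Rightarrow> ennreal"
  assumes H: "H \<in> borel_measurable S"
  shows "(\<integral>\<^sup>+\<omega>. H \<omega> \<partial>S) = (\<integral>\<^sup>+e. \<integral>\<^sup>+\<omega>. H (case_nat e \<omega>) \<partial>S \<partial>M)"
proof -
  have case_nat: "(\<lambda>(e, \<omega>). case_nat e \<omega>) \<in> measurable (M \<Otimes>\<^sub>M S) S" by measurable
  have "(\<integral>\<^sup>+\<omega>. H \<omega> \<partial>S) = (\<integral>\<^sup>+\<omega>. H \<omega> \<partial>distr (M \<Otimes>\<^sub>M S) S (\<lambda>(e, \<omega>). case_nat e \<omega>))"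
    by (simp add: PiM_iter)
  also have "\<dots> = (\<integral>\<^sup>+p. H (case_nat (fst p) (snd p)) \<partial>(M \<Otimes>\<^sub>M S))"
    by (subst nn_integral_distr[OF case_nat]) (simp_all add: H case_prod_beta)
  also have "\<dots> = (\<integral>\<^sup>+e. \<integral>\<^sup>+\<omega>. H (case_nat e \<omega>) \<partial>S \<partial>M)"
    using measurable_compose[OF case_nat H]
    by (subst P.nn_integral_fst[symmetric]) (simp_all add: case_prod_beta)
  finally show ?thesis .
qed

subsection \<open>Extinction probabilities for i.i.d.\ samples\<close>

primrec wf_chain :: "nat \<Rightarrow> nat \<Rightarrow> (nat \<Rightarrow> step_sample) \<Rightarrow> nat" where
  "wf_chain L 0 \<omega> = L"
| "wf_chain L (Suc n) \<omega> = wf_step (wf_chain L n \<omega>) (\<omega> n)"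

lemma wf_chain_Suc_shift: "wf_chain L (Suc n) \<omega> = wf_chain (wf_step L (\<omega> 0)) n (\<lambda>i. \<omega> (Suc i))"
  by (induction n) auto

lemma wf_chain_mono: "L \<le> L' \<Longrightarrow> wf_chain L n \<omega> \<le> wf_chain L' n \<omega>"
  by (induction n) (auto intro: wf_step_mono)

lemma wf_step_0: "wf_step 0 e = 0"
  by (simp add: wf_step_def step_children_def wf_count_def)

lemma wf_chain_eq_0_mono: "wf_chain L n \<omega> = 0 \<Longrightarrow> n \<le> m \<Longrightarrow> wf_chain L m \<omega> = 0"
  by (induction m) (auto simp: le_Suc_eq wf_step_0)

locale iid_steps =
  fixes \<nu>D \<nu>X \<nu>R :: "real measure"
  assumes prob_space_D: "prob_space \<nu>D" and prob_space_X: "prob_space \<nu>X"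
    and prob_space_R: "prob_space \<nu>R"
    and sets_D: "sets \<nu>D = sets borel" and sets_X: "sets \<nu>X = sets borel"
    and sets_R: "sets \<nu>R = sets borel"
begin

abbreviation "SD \<equiv> PiM UNIV (\<lambda>_::nat. \<nu>D)"
abbreviation "SX \<equiv> PiM UNIV (\<lambda>_::nat. \<nu>X)"
abbreviation "SR \<equiv> PiM UNIV (\<lambda>_::nat. \<nu>R)"
abbreviation "Q \<equiv> SD \<Otimes>\<^sub>M (SX \<Otimes>\<^sub>M SR)"
abbreviation "P \<equiv> PiM UNIV (\<lambda>_::nat. Q)"

sublocale SD: sequence_space \<nu>D by (rule prob_space_imp_sequence_space[OF prob_space_D])
sublocale SX: sequence_space \<nu>X by (rule prob_space_imp_sequence_space[OF prob_space_X])
sublocale SR: sequence_space \<nu>R by (rule prob_space_imp_sequence_space[OF prob_space_R])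

lemma prob_space_Q: "prob_space Q"
  by (intro prob_space_pair SD.P.prob_space_axioms SX.P.prob_space_axioms SR.P.prob_space_axioms)

sublocale SQ: sequence_space Q by (rule prob_space_imp_sequence_space[OF prob_space_Q])

lemma sets_Q: "sets Q = sets sample_borel"
  by (intro sets_pair_measure_cong sets_PiM_cong) (simp_all add: sets_D sets_X sets_R)

lemma space_SD[simp]: "space SD = UNIV" by (simp add: space_PiM sets_eq_imp_space_eq[OF sets_D])
lemma space_SX[simp]: "space SX = UNIV" by (simp add: space_PiM sets_eq_imp_space_eq[OF sets_X])
lemma space_SR[simp]: "space SR = UNIV" by (simp add: space_PiM sets_eq_imp_space_eq[OF sets_R])
lemma space_Q[simp]: "space Q = UNIV" by (simp add: space_pair_measure)
lemma space_P[simp]: "space P = UNIV" by (simp add: space_PiM)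

lemma measurable_wf_step_Q[measurable]: "wf_step w \<in> measurable Q (count_space UNIV)"
  using measurable_wf_step by (simp add: measurable_cong_sets[OF sets_Q refl])

lemma measurable_shift_sample_Q[measurable]: "shift_sample a \<in> measurable Q Q"
  using measurable_shift_sample by (simp add: measurable_cong_sets[OF sets_Q sets_Q])

lemma nn_integral_Q:
  assumes h: "h \<in> borel_measurable Q"
  shows "(\<integral>\<^sup>+e. h e \<partial>Q) = (\<integral>\<^sup>+d. \<integral>\<^sup>+x. \<integral>\<^sup>+r. h (d, x, r) \<partial>SR \<partial>SX \<partial>SD)"
proof -
  interpret XR: prob_space "SX \<Otimes>\<^sub>M SR"
    by (intro prob_space_pair SX.P.prob_space_axioms SR.P.prob_space_axioms)
  have "(\<integral>\<^sup>+e. h e \<partial>Q) = (\<integral>\<^sup>+d. \<integral>\<^sup>+p. h (d, p) \<partial>(SX \<Otimes>\<^sub>M SR) \<partial>SD)"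
    by (rule XR.nn_integral_fst[symmetric, OF h])
  also have "\<dots> = (\<integral>\<^sup>+d. \<integral>\<^sup>+x. \<integral>\<^sup>+r. h (d, x, r) \<partial>SR \<partial>SX \<partial>SD)"
  proof (rule nn_integral_cong)
    fix d :: "nat \<Rightarrow> real"
    have "(\<lambda>p. h (d, p)) \<in> borel_measurable (SX \<Otimes>\<^sub>M SR)" using h by measurable
    then show "(\<integral>\<^sup>+p. h (d, p) \<partial>(SX \<Otimes>\<^sub>M SR)) = (\<integral>\<^sup>+x. \<integral>\<^sup>+r. h (d, x, r) \<partial>SR \<partial>SX)"
      by (rule SR.nn_integral_fst[symmetric])
  qed
  finally show ?thesis .
qed

lemma nn_integral_XR_mult_shift:
  assumes A[measurable]: "A \<in> borel_measurable Q" and B[measurable]: "B \<in> borel_measurable Q"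
    and A_local: "\<And>x x' r r'. (\<And>i. i < m \<Longrightarrow> x i = x' i) \<Longrightarrow> (\<And>i. i < a \<Longrightarrow> r i = r' i)
      \<Longrightarrow> A (d, x, r) = A (d, x', r')"
  shows "(\<integral>\<^sup>+x. \<integral>\<^sup>+r. A (d, x, r) * B (d', shift_seq m x, shift_seq a r) \<partial>SR \<partial>SX)
       = (\<integral>\<^sup>+x. \<integral>\<^sup>+r. A (d, x, r) \<partial>SR \<partial>SX) * (\<integral>\<^sup>+x. \<integral>\<^sup>+r. B (d', x, r) \<partial>SR \<partial>SX)"
proof -
  have "(\<integral>\<^sup>+x. \<integral>\<^sup>+r. A (d, x, r) * B (d', shift_seq m x, shift_seq a r) \<partial>SR \<partial>SX)
      = (\<integral>\<^sup>+x. (\<integral>\<^sup>+r. A (d, x, r) \<partial>SR) * (\<integral>\<^sup>+r. B (d', shift_seq m x, r) \<partial>SR) \<partial>SX)"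
  proof (rule nn_integral_cong)
    fix x :: "nat \<Rightarrow> real"
    have "(\<lambda>r. A (d, x, r)) \<in> borel_measurable SR" "(\<lambda>r. B (d', shift_seq m x, r)) \<in> borel_measurable SR"
      by measurable
    moreover have "A (d, x, r) = A (d, x, r')" if "\<And>i. i < a \<Longrightarrow> r i = r' i" for r r'
      using that by (intro A_local) auto
    ultimately show "(\<integral>\<^sup>+r. A (d, x, r) * B (d', shift_seq m x, shift_seq a r) \<partial>SR)
        = (\<integral>\<^sup>+r. A (d, x, r) \<partial>SR) * (\<integral>\<^sup>+r. B (d', shift_seq m x, r) \<partial>SR)"
      by (rule SR.nn_integral_mult_shift_seq)
  qed
  also have "\<dots> = (\<integral>\<^sup>+x. \<integral>\<^sup>+r. A (d, x, r) \<partial>SR \<partial>SX) * (\<integral>\<^sup>+x. \<integral>\<^sup>+r. B (d', x, r) \<partial>SR \<partial>SX)"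
  proof -
    have "(\<lambda>x. \<integral>\<^sup>+r. A (d, x, r) \<partial>SR) \<in> borel_measurable SX"
      "(\<lambda>x. \<integral>\<^sup>+r. B (d', x, r) \<partial>SR) \<in> borel_measurable SX"
      by measurable
    moreover have "(\<integral>\<^sup>+r. A (d, x, r) \<partial>SR) = (\<integral>\<^sup>+r. A (d, x', r) \<partial>SR)"
      if "\<And>i. i < m \<Longrightarrow> x i = x' i" for x x'
      using that by (intro nn_integral_cong A_local) auto
    ultimately show ?thesis by (rule SX.nn_integral_mult_shift_seq)
  qed
  finally show ?thesis .
qed

text \<open>The block of the sample discarded by \<open>shift_sample a\<close> is independent of the remainder,
  which is again distributed according to \<open>Q\<close>.\<close>

lemma nn_integral_mult_shift_sample:
  assumes A[measurable]: "A \<in> borel_measurable Q" and B[measurable]: "B \<in> borel_measurable Q"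
    and A_local: "\<And>d d' x x' r r'. (\<And>i. i < a \<Longrightarrow> d i = d' i) \<Longrightarrow>
      (\<And>i. i < step_children a (d, x, r) \<Longrightarrow> x i = x' i) \<Longrightarrow> (\<And>i. i < a \<Longrightarrow> r i = r' i) \<Longrightarrow>
      A (d, x, r) = A (d', x', r')"
  shows "(\<integral>\<^sup>+e. A e * B (shift_sample a e) \<partial>Q) = (\<integral>\<^sup>+e. A e \<partial>Q) * (\<integral>\<^sup>+e. B e \<partial>Q)"
proof -
  define m where "m = (\<lambda>d. step_children a (d, \<lambda>_. 0, \<lambda>_. 0))"
  have m: "step_children a (d, x, r) = m d" for d x r by (simp add: step_children_def m_def)
  have AB: "(\<lambda>e. A e * B (shift_sample a e)) \<in> borel_measurable Q" by measurable
  have "(\<integral>\<^sup>+e. A e * B (shift_sample a e) \<partial>Q) =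
      (\<integral>\<^sup>+d. \<integral>\<^sup>+x. \<integral>\<^sup>+r. A (d, x, r) * B (shift_seq a d, shift_seq (m d) x, shift_seq a r) \<partial>SR \<partial>SX \<partial>SD)"
    by (simp only: nn_integral_Q[OF AB]) (simp add: shift_sample_def m)
  also have "\<dots> = (\<integral>\<^sup>+d. (\<integral>\<^sup>+x. \<integral>\<^sup>+r. A (d, x, r) \<partial>SR \<partial>SX) *
      (\<lambda>d'. \<integral>\<^sup>+x. \<integral>\<^sup>+r. B (d', x, r) \<partial>SR \<partial>SX) (shift_seq a d) \<partial>SD)"
  proof (rule nn_integral_cong)
    fix d :: "nat \<Rightarrow> real"
    show "(\<integral>\<^sup>+x. \<integral>\<^sup>+r. A (d, x, r) * B (shift_seq a d, shift_seq (m d) x, shift_seq a r) \<partial>SR \<partial>SX)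
      = (\<integral>\<^sup>+x. \<integral>\<^sup>+r. A (d, x, r) \<partial>SR \<partial>SX) *
        (\<lambda>d'. \<integral>\<^sup>+x. \<integral>\<^sup>+r. B (d', x, r) \<partial>SR \<partial>SX) (shift_seq a d)"
      by (rule nn_integral_XR_mult_shift[OF A B]) (rule A_local; auto simp: m)
  qed
  also have "\<dots> = (\<integral>\<^sup>+d. \<integral>\<^sup>+x. \<integral>\<^sup>+r. A (d, x, r) \<partial>SR \<partial>SX \<partial>SD) *
      (\<integral>\<^sup>+d. \<integral>\<^sup>+x. \<integral>\<^sup>+r. B (d, x, r) \<partial>SR \<partial>SX \<partial>SD)"
  proof -
    have "(\<lambda>d. \<integral>\<^sup>+x. \<integral>\<^sup>+r. A (d, x, r) \<partial>SR \<partial>SX) \<in> borel_measurable SD"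
      "(\<lambda>d. \<integral>\<^sup>+x. \<integral>\<^sup>+r. B (d, x, r) \<partial>SR \<partial>SX) \<in> borel_measurable SD"
      by measurable
    moreover have "(\<integral>\<^sup>+x. \<integral>\<^sup>+r. A (d, x, r) \<partial>SR \<partial>SX) = (\<integral>\<^sup>+x. \<integral>\<^sup>+r. A (d', x, r) \<partial>SR \<partial>SX)"
      if d: "\<And>i. i < a \<Longrightarrow> d i = d' i" for d d'
    proof -
      have "m d = m d'" unfolding m_def step_children_def using d by (auto intro: sum.cong)
      with d show ?thesis by (intro nn_integral_cong A_local) (auto simp: m)
    qed
    ultimately show ?thesis by (rule SD.nn_integral_mult_shift_seq)
  qed
  finally show ?thesis by (simp only: nn_integral_Q[OF A] nn_integral_Q[OF B])
qed

lemma nn_integral_wf_step_shift_mult: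
  fixes \<phi> \<psi> :: "nat \<Rightarrow> ennreal"
  shows "(\<integral>\<^sup>+e. \<phi> (wf_step a e) * \<psi> (wf_step b (shift_sample a e)) \<partial>Q)
       = (\<integral>\<^sup>+e. \<phi> (wf_step a e) \<partial>Q) * (\<integral>\<^sup>+e. \<psi> (wf_step b e) \<partial>Q)"
proof (rule nn_integral_mult_shift_sample)
  have [measurable]: "\<phi> \<in> borel_measurable (count_space UNIV)" "\<psi> \<in> borel_measurable (count_space UNIV)"
    by simp_all
  show "(\<lambda>e. \<phi> (wf_step a e)) \<in> borel_measurable Q" "(\<lambda>e. \<psi> (wf_step b e)) \<in> borel_measurable Q"
    by measurable
qed (intro arg_cong[where f = \<phi>] wf_step_local)

lemma measurable_wf_chain[measurable]: "wf_chain L n \<in> measurable P (count_space UNIV)"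
proof (induction n)
  case 0
  then show ?case by simp
next
  case (Suc n)
  have "wf_chain L (Suc n) = (\<lambda>\<omega>. (\<lambda>w \<omega>. wf_step w (\<omega> n)) (wf_chain L n \<omega>) \<omega>)"
    by (simp add: fun_eq_iff)
  also have "\<dots> \<in> measurable P (count_space UNIV)"
    by (rule measurable_compose_countable[OF _ Suc]) measurable
  finally show ?case .
qed

definition ext_prob :: "nat \<Rightarrow> nat \<Rightarrow> ennreal" where
  "ext_prob n L = emeasure P {\<omega>. wf_chain L n \<omega> = 0}"

lemma sets_wf_chain_eq_0[measurable]: "{\<omega>. wf_chain L n \<omega> = 0} \<in> sets P"
  using measurable_sets[OF measurable_wf_chain, of "{0}"] by (simp add: vimage_def)

lemma ext_prob_Suc: "ext_prob (Suc n) L = (\<integral>\<^sup>+e. ext_prob n (wf_step L e) \<partial>Q)"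
proof -
  have "ext_prob (Suc n) L = (\<integral>\<^sup>+\<omega>. indicator {\<omega>. wf_chain L (Suc n) \<omega> = 0} \<omega> \<partial>P)"
    unfolding ext_prob_def by (simp del: wf_chain.simps)
  also have "\<dots> = (\<integral>\<^sup>+e. \<integral>\<^sup>+\<omega>. indicator {\<omega>. wf_chain L (Suc n) \<omega> = 0} (case_nat e \<omega>) \<partial>P \<partial>Q)"
    by (rule SQ.nn_integral_case_nat) measurable
  also have "\<dots> = (\<integral>\<^sup>+e. \<integral>\<^sup>+\<omega>. indicator {\<omega>. wf_chain (wf_step L e) n \<omega> = 0} \<omega> \<partial>P \<partial>Q)"
    by (intro nn_integral_cong) (simp add: wf_chain_Suc_shift indicator_def del: wf_chain.simps)
  also have "\<dots> = (\<integral>\<^sup>+e. ext_prob n (wf_step L e) \<partial>Q)"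
    unfolding ext_prob_def by simp
  finally show ?thesis .
qed

lemma ext_prob_antimono:
  assumes "L \<le> L'"
  shows "ext_prob n L' \<le> ext_prob n L"
proof -
  have "{\<omega>. wf_chain L' n \<omega> = 0} \<subseteq> {\<omega>. wf_chain L n \<omega> = 0}"
  proof
    fix \<omega> assume "\<omega> \<in> {\<omega>. wf_chain L' n \<omega> = 0}"
    then show "\<omega> \<in> {\<omega>. wf_chain L n \<omega> = 0}" using wf_chain_mono[OF assms, of n \<omega>] by simp
  qed
  then show ?thesis unfolding ext_prob_def by (rule emeasure_mono) simp
qed

lemma ext_prob_add_le_mult: "ext_prob n (a + b) \<le> ext_prob n a * ext_prob n b"
proof (induction n arbitrary: a b)
  case 0
  show ?case by (simp add: ext_prob_def SQ.P.emeasure_space_1[simplified])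
next
  case (Suc n)
  have "ext_prob (Suc n) (a + b) = (\<integral>\<^sup>+e. ext_prob n (wf_step (a + b) e) \<partial>Q)" by (rule ext_prob_Suc)
  also have "\<dots> \<le> (\<integral>\<^sup>+e. ext_prob n (wf_step a e + wf_step b (shift_sample a e)) \<partial>Q)"
    by (intro nn_integral_mono ext_prob_antimono wf_step_superadd)
  also have "\<dots> \<le> (\<integral>\<^sup>+e. ext_prob n (wf_step a e) * ext_prob n (wf_step b (shift_sample a e)) \<partial>Q)"
    by (intro nn_integral_mono Suc.IH)
  also have "\<dots> = (\<integral>\<^sup>+e. ext_prob n (wf_step a e) \<partial>Q) * (\<integral>\<^sup>+e. ext_prob n (wf_step b e) \<partial>Q)"
    by (rule nn_integral_wf_step_shift_mult)
  also have "\<dots> = ext_prob (Suc n) a * ext_prob (Suc n) b" by (simp add: ext_prob_Suc)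
  finally show ?case .
qed

lemma ext_prob_le_power: "ext_prob n L \<le> ext_prob n 1 ^ L"
proof (induction L)
  case 0
  then show ?case unfolding ext_prob_def by (simp add: SQ.P.emeasure_le_1)
next
  case (Suc L)
  have "ext_prob n (1 + L) \<le> ext_prob n 1 * ext_prob n L" by (rule ext_prob_add_le_mult)
  also have "\<dots> \<le> ext_prob n 1 * ext_prob n 1 ^ L" by (intro mult_left_mono Suc.IH) simp
  finally show ?case by simp
qed

definition extinct :: "nat \<Rightarrow> (nat \<Rightarrow> step_sample) set" where
  "extinct L = {\<omega>. \<exists>n. wf_chain L n \<omega> = 0}"

lemma sets_extinct[measurable]: "extinct L \<in> sets P"
proof -
  have "extinct L = (\<Union>n. {\<omega>. wf_chain L n \<omega> = 0})" unfolding extinct_def by auto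
  then show ?thesis by simp
qed

lemma emeasure_extinct_eq_SUP: "emeasure P (extinct L) = (SUP n. ext_prob n L)"
proof -
  have "(SUP n. ext_prob n L) = emeasure P (\<Union>n. {\<omega>. wf_chain L n \<omega> = 0})"
    unfolding ext_prob_def
    by (rule SUP_emeasure_incseq) (auto simp: incseq_def intro: wf_chain_eq_0_mono)
  also have "(\<Union>n. {\<omega>. wf_chain L n \<omega> = 0}) = extinct L" unfolding extinct_def by auto
  finally show ?thesis by simp
qed

lemma emeasure_extinct_le_power: "emeasure P (extinct L) \<le> emeasure P (extinct 1) ^ L"
  unfolding emeasure_extinct_eq_SUP
proof (rule SUP_least)
  fix n
  have "ext_prob n L \<le> ext_prob n 1 ^ L" by (rule ext_prob_le_power)
  also have "\<dots> \<le> (SUP n. ext_prob n 1) ^ L" by (intro power_mono SUP_upper) simp_all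
  finally show "ext_prob n L \<le> (SUP n. ext_prob n 1) ^ L" .
qed

end

subsection \<open>Coupling the weakest-first process with an i.i.d.\ sample sequence\<close>

lemma LIMSEQ_0_iff_ex_eq_0:
  fixes f :: "nat \<Rightarrow> nat"
  assumes absorbing: "\<And>n. f n = 0 \<Longrightarrow> f (Suc n) = 0"
  shows "f \<longlonglongrightarrow> 0 \<longleftrightarrow> (\<exists>n. f n = 0)"
proof
  assume "f \<longlonglongrightarrow> 0"
  then show "\<exists>n. f n = 0" by (metis Lim_bounded2 bot_nat_0.extremum_unique ex_has_least_nat)
next
  assume "\<exists>n. f n = 0"
  then obtain n where "f n = 0" by blast
  then have "f m = 0" if "n \<le> m" for m
    using that absorbing by (induction m) (auto simp: le_Suc_eq)
  then show "f \<longlonglongrightarrow> 0" by (intro tendsto_eventually) (auto simp: eventually_sequentially)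
qed

definition step_vars :: "(nat \<Rightarrow> nat \<Rightarrow> 'a \<Rightarrow> nat) \<Rightarrow> (nat \<Rightarrow> nat \<Rightarrow> 'a \<Rightarrow> real) \<Rightarrow>
    (nat \<Rightarrow> nat \<Rightarrow> 'a \<Rightarrow> real) \<Rightarrow> 'a \<Rightarrow> nat \<Rightarrow> step_sample" where
  "step_vars D X R \<omega> n = (\<lambda>k. real (D n (Suc k) \<omega>), \<lambda>k. X n (Suc k) \<omega>, \<lambda>k. R n (Suc k) \<omega>)"

lemma wf_proc_eq_wf_chain:
  assumes X_nonneg: "\<And>n k. 0 \<le> X n k \<omega>" and R_nonneg: "\<And>n k. 0 \<le> R n k \<omega>"
  shows "wf_proc D X R L n \<omega> = wf_chain L n (step_vars D X R \<omega>)"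
proof (induction n)
  case 0
  then show ?case by simp
next
  case (Suc n)
  let ?W = "wf_proc D X R L n \<omega>" and ?e = "step_vars D X R \<omega> n"
  have "step_children ?W ?e = Dsum D n ?W \<omega>"
    unfolding step_children_def Dsum_def step_vars_def by (simp add: sum.atLeast1_atMost_eq)
  moreover have "step_resources ?W ?e = Rsum R n ?W \<omega>"
    unfolding step_resources_def Rsum_def step_vars_def
    using R_nonneg by (simp add: sum.atLeast1_atMost_eq max_absorb2)
  moreover have "wf_count t (step_costs ?e) s = wf_count t (\<lambda>k. X n k \<omega>) s" for t s
    by (rule wf_count_cong) (auto simp: step_costs_def step_vars_def X_nonneg max_absorb2)
  ultimately have "wf_proc D X R L (Suc n) \<omega> = wf_step ?W ?e" by (simp add: wf_step_def)
  with Suc show ?case by simp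
qed

lemma measurable_PiM_row:
  assumes "\<And>k. (c, n, Suc k) \<in> I"
  shows "(\<lambda>y k. y (c, n, Suc k)) \<in> measurable (PiM I (\<lambda>_. N)) (PiM UNIV (\<lambda>_::nat. N))"
  using assms by (intro measurable_PiM_single') (auto intro!: measurable_component_singleton simp: space_PiM)

lemma (in prob_space) distr_indep_vars_seq_eq_PiM:
  fixes Y :: "'i \<Rightarrow> 'a \<Rightarrow> real"
  assumes indep: "indep_vars (\<lambda>_. borel) Y I" and "inj \<phi>" and "range \<phi> \<subseteq> I"
    and law: "\<And>k. distr M borel (Y (\<phi> k)) = \<nu>"
  shows "distr M seq_borel (\<lambda>\<omega> k. Y (\<phi> k) \<omega>) = PiM UNIV (\<lambda>_::nat. \<nu>)"
proof -
  have "indep_vars (\<lambda>k. PiM {\<phi> k} (\<lambda>_. borel)) (\<lambda>k \<omega>. restrict (\<lambda>i. Y i \<omega>) {\<phi> k}) UNIV"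
    using assms by (intro indep_vars_restrict[OF indep]) (auto simp: disjoint_family_on_def inj_eq)
  then have "indep_vars (\<lambda>_. borel) (\<lambda>k \<omega>. (\<lambda>y. y (\<phi> k)) (restrict (\<lambda>i. Y i \<omega>) {\<phi> k})) UNIV"
    by (rule indep_vars_compose2) (rule measurable_component_singleton, simp)
  then have "indep_vars (\<lambda>_. borel) (\<lambda>k. Y (\<phi> k)) UNIV" by simp
  moreover have "random_variable borel (Y (\<phi> k))" for k
    using indep \<open>range \<phi> \<subseteq> I\<close> by (auto simp: indep_vars_def)
  ultimately have "distr M seq_borel (\<lambda>\<omega>. \<lambda>k\<in>UNIV. Y (\<phi> k) \<omega>) = PiM UNIV (\<lambda>k. distr M borel (Y (\<phi> k)))"
    by (subst (asm) indep_vars_iff_distr_eq_PiM') simp_all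
  then show ?thesis by (simp add: law restrict_UNIV)
qed

lemma (in prob_space) indep_var_distr_pair_eq:
  assumes ind: "indep_var MA U MB V" and f: "f \<in> measurable MA S" and g: "g \<in> measurable MB T"
  shows "distr M (S \<Otimes>\<^sub>M T) (\<lambda>\<omega>. (f (U \<omega>), g (V \<omega>)))
       = distr M S (\<lambda>\<omega>. f (U \<omega>)) \<Otimes>\<^sub>M distr M T (\<lambda>\<omega>. g (V \<omega>))"
proof -
  have U: "random_variable MA U" and V: "random_variable MB V"
    using ind by (rule indep_var_rv1, rule indep_var_rv2)
  have f': "f \<in> measurable (distr M MA U) S" and g': "g \<in> measurable (distr M MB V) T"
    using f g by simp_all
  have sf: "sigma_finite_measure (distr (distr M MB V) T g)"
    by (intro prob_space_imp_sigma_finite prob_space.prob_space_distr[OF prob_space_distr[OF V] g'])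
  have "distr M S (\<lambda>\<omega>. f (U \<omega>)) \<Otimes>\<^sub>M distr M T (\<lambda>\<omega>. g (V \<omega>))
      = distr (distr M MA U) S f \<Otimes>\<^sub>M distr (distr M MB V) T g"
    using U V f g by (simp add: distr_distr comp_def)
  also have "\<dots> = distr (distr M MA U \<Otimes>\<^sub>M distr M MB V) (S \<Otimes>\<^sub>M T) (\<lambda>(x, y). (f x, g y))"
    by (rule pair_measure_distr[OF f' g' sf])
  also have "distr M MA U \<Otimes>\<^sub>M distr M MB V = distr M (MA \<Otimes>\<^sub>M MB) (\<lambda>\<omega>. (U \<omega>, V \<omega>))"
    using ind by (simp add: indep_var_distribution_eq)
  finally show ?thesis using U V f g by (subst (asm) distr_distr) (auto simp: comp_def)
qed

locale wf_arrays = prob_space M for M :: "'a measure" +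
  fixes D :: "nat \<Rightarrow> nat \<Rightarrow> 'a \<Rightarrow> nat" and X R :: "nat \<Rightarrow> nat \<Rightarrow> 'a \<Rightarrow> real"
  assumes measurable_D: "\<And>n k. D n k \<in> measurable M (count_space UNIV)"
    and measurable_X: "\<And>n k. X n k \<in> borel_measurable M"
    and measurable_R: "\<And>n k. R n k \<in> borel_measurable M"
    and indep: "indep_vars (\<lambda>_. borel) (all_vars D X R) var_index"
    and ident_D: "\<And>n k. 1 \<le> k \<Longrightarrow> distr M (count_space UNIV) (D n k) = distr M (count_space UNIV) (D 0 1)"
    and ident_X: "\<And>n k. 1 \<le> k \<Longrightarrow> distr M borel (X n k) = distr M borel (X 0 1)"
    and ident_R: "\<And>n k. 1 \<le> k \<Longrightarrow> distr M borel (R n k) = distr M borel (R 0 1)"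
    and X_nonneg: "\<And>n k \<omega>. \<omega> \<in> space M \<Longrightarrow> 0 \<le> X n k \<omega>"
    and R_nonneg: "\<And>n k \<omega>. \<omega> \<in> space M \<Longrightarrow> 0 \<le> R n k \<omega>"
begin

definition law_D :: "real measure" where "law_D = distr M borel (\<lambda>\<omega>. real (D 0 1 \<omega>))"
definition law_X :: "real measure" where "law_X = distr M borel (X 0 1)"
definition law_R :: "real measure" where "law_R = distr M borel (R 0 1)"

lemma all_vars_simps:
  "all_vars D X R (0, n, k) = (\<lambda>\<omega>. real (D n k \<omega>))"
  "all_vars D X R (Suc 0, n, k) = X n k"
  "all_vars D X R (2, n, k) = R n k"
  by (simp_all add: all_vars_def fun_eq_iff)

lemma measurable_real_D[measurable]: "(\<lambda>\<omega>. real (D n k \<omega>)) \<in> borel_measurable M"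
  using measurable_compose[OF measurable_D, of real borel] by simp

sublocale steps: iid_steps law_D law_X law_R
  using measurable_X measurable_R
  by (intro iid_steps.intro) (simp_all add: law_D_def law_X_def law_R_def prob_space_distr)

lemma distr_D:
  assumes "1 \<le> k"
  shows "distr M borel (\<lambda>\<omega>. real (D n k \<omega>)) = law_D"
proof -
  have "distr M borel (\<lambda>\<omega>. real (D m j \<omega>)) = distr (distr M (count_space UNIV) (D m j)) borel real"
    for m j by (subst distr_distr) (auto simp: comp_def measurable_D)
  then show ?thesis using ident_D[OF assms, of n] by (simp add: law_D_def)
qed

lemma distr_rows:
  "distr M seq_borel (\<lambda>\<omega> k. real (D n (Suc k) \<omega>)) = steps.SD"
  "distr M seq_borel (\<lambda>\<omega> k. X n (Suc k) \<omega>) = steps.SX"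
  "distr M seq_borel (\<lambda>\<omega> k. R n (Suc k) \<omega>) = steps.SR"
proof -
  have row: "distr M seq_borel (\<lambda>\<omega> k. all_vars D X R (c, n, Suc k) \<omega>) = PiM UNIV (\<lambda>_::nat. \<nu>)"
    if "c \<le> 2" "\<And>k. distr M borel (all_vars D X R (c, n, Suc k)) = \<nu>" for c \<nu>
    using that by (intro distr_indep_vars_seq_eq_PiM[OF indep]) (auto simp: inj_def var_index_def)
  show "distr M seq_borel (\<lambda>\<omega> k. real (D n (Suc k) \<omega>)) = steps.SD"
    using row[of 0 law_D] by (simp add: all_vars_simps distr_D)
  show "distr M seq_borel (\<lambda>\<omega> k. X n (Suc k) \<omega>) = steps.SX"
    using row[of "Suc 0" law_X] ident_X[of "Suc _" n] by (simp add: all_vars_simps law_X_def)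
  show "distr M seq_borel (\<lambda>\<omega> k. R n (Suc k) \<omega>) = steps.SR"
    using row[of 2 law_R] ident_R[of "Suc _" n] by (simp add: all_vars_simps law_R_def)
qed

lemma distr_step_vars: "distr M steps.Q (\<lambda>\<omega>. step_vars D X R \<omega> n) = steps.Q"
proof -
  let ?vars = "\<lambda>I \<omega>. restrict (\<lambda>i. all_vars D X R i \<omega>) I"
  let ?A = "{(0::nat, n, k) | k. 1 \<le> k}"
    and ?B = "{(c::nat, n, k) | c k. (c = 1 \<or> c = 2) \<and> 1 \<le> k}"
  let ?B1 = "{(1::nat, n, k) | k. 1 \<le> k}" and ?B2 = "{(2::nat, n, k) | k. 1 \<le> k}"
  have indep_XR: "indep_var (PiM ?B1 (\<lambda>_. borel)) (?vars ?B1) (PiM ?B2 (\<lambda>_. borel)) (?vars ?B2)"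
    by (rule indep_var_restrict[OF indep]) (auto simp: var_index_def)
  have row1: "(\<lambda>y k. y (1::nat, n, Suc k)) \<in> measurable (PiM ?B1 (\<lambda>_. borel)) seq_borel"
    by (rule measurable_PiM_row) simp
  have row2: "(\<lambda>y k. y (2::nat, n, Suc k)) \<in> measurable (PiM ?B2 (\<lambda>_. borel)) seq_borel"
    by (rule measurable_PiM_row) simp
  have XR: "distr M (seq_borel \<Otimes>\<^sub>M seq_borel) (\<lambda>\<omega>. (\<lambda>k. X n (Suc k) \<omega>, \<lambda>k. R n (Suc k) \<omega>))
      = steps.SX \<Otimes>\<^sub>M steps.SR"
    using indep_var_distr_pair_eq[OF indep_XR row1 row2] by (simp add: all_vars_def distr_rows)
  have indep_D_XR: "indep_var (PiM ?A (\<lambda>_. borel)) (?vars ?A) (PiM ?B (\<lambda>_. borel)) (?vars ?B)"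
    by (rule indep_var_restrict[OF indep]) (auto simp: var_index_def)
  have row0: "(\<lambda>y k. y (0::nat, n, Suc k)) \<in> measurable (PiM ?A (\<lambda>_. borel)) seq_borel"
    by (rule measurable_PiM_row) simp
  have rows12: "(\<lambda>y. (\<lambda>k. y (1::nat, n, Suc k), \<lambda>k. y (2::nat, n, Suc k)))
      \<in> measurable (PiM ?B (\<lambda>_. borel)) (seq_borel \<Otimes>\<^sub>M seq_borel)"
    by (intro measurable_Pair; rule measurable_PiM_row) simp_all
  have "distr M sample_borel (\<lambda>\<omega>. step_vars D X R \<omega> n) = steps.Q"
    using indep_var_distr_pair_eq[OF indep_D_XR row0 rows12] XR
    by (simp add: all_vars_def step_vars_def distr_rows)
  moreover have "distr M steps.Q (\<lambda>\<omega>. step_vars D X R \<omega> n)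
      = distr M sample_borel (\<lambda>\<omega>. step_vars D X R \<omega> n)"
    by (rule distr_cong[OF refl steps.sets_Q]) simp
  ultimately show ?thesis by simp
qed

lemma measurable_step_vars: "(\<lambda>\<omega>. step_vars D X R \<omega> n) \<in> measurable M steps.Q"
proof -
  have "(\<lambda>\<omega>. step_vars D X R \<omega> n) \<in> measurable M sample_borel"
    unfolding step_vars_def using measurable_X measurable_R
    by (intro measurable_Pair measurable_abs_UNIV) simp_all
  then show ?thesis unfolding measurable_cong_sets[OF refl steps.sets_Q] .
qed

lemma indep_step_vars: "indep_vars (\<lambda>_. steps.Q) (\<lambda>n \<omega>. step_vars D X R \<omega> n) UNIV"
proof -
  let ?K = "\<lambda>n. {(c::nat, n', k) | c n' k. n' = n \<and> c \<le> 2 \<and> 1 \<le> k}"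
  let ?rows = "\<lambda>n y. (\<lambda>k. y (0::nat, n, Suc k), \<lambda>k. y (1::nat, n, Suc k), \<lambda>k. y (2::nat, n, Suc k))"
  have "indep_vars (\<lambda>n. PiM (?K n) (\<lambda>_. borel)) (\<lambda>n \<omega>. restrict (\<lambda>i. all_vars D X R i \<omega>) (?K n)) UNIV"
    by (rule indep_vars_restrict[OF indep]) (auto simp: var_index_def disjoint_family_on_def)
  moreover have "?rows n \<in> measurable (PiM (?K n) (\<lambda>_. borel)) steps.Q" for n
  proof -
    have "?rows n \<in> measurable (PiM (?K n) (\<lambda>_. borel)) sample_borel"
      by (intro measurable_Pair; rule measurable_PiM_row) simp_all
    then show ?thesis unfolding measurable_cong_sets[OF refl steps.sets_Q] .
  qed
  ultimately have "indep_vars (\<lambda>_. steps.Q)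
      (\<lambda>n \<omega>. ?rows n (restrict (\<lambda>i. all_vars D X R i \<omega>) (?K n))) UNIV"
    by (rule indep_vars_compose2)
  moreover have "(\<lambda>n \<omega>. ?rows n (restrict (\<lambda>i. all_vars D X R i \<omega>) (?K n)))
      = (\<lambda>n \<omega>. step_vars D X R \<omega> n)"
    by (simp add: fun_eq_iff step_vars_def all_vars_def)
  ultimately show ?thesis by simp
qed

lemma distr_step_vars_seq: "distr M steps.P (step_vars D X R) = steps.P"
proof -
  have "distr M steps.P (\<lambda>\<omega>. \<lambda>n\<in>UNIV. step_vars D X R \<omega> n)
      = PiM UNIV (\<lambda>n. distr M steps.Q (\<lambda>\<omega>. step_vars D X R \<omega> n))"
    using indep_step_vars measurable_step_vars by (subst (asm) indep_vars_iff_distr_eq_PiM') simp_all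
  then show ?thesis by (simp add: distr_step_vars restrict_UNIV)
qed

lemma measure_wf_proc_tendsto_0:
  "measure M {\<omega> \<in> space M. (\<lambda>n. wf_proc D X R L n \<omega>) \<longlonglongrightarrow> 0} = measure steps.P (steps.extinct L)"
proof -
  have "(\<lambda>n. wf_proc D X R L n \<omega>) \<longlonglongrightarrow> 0 \<longleftrightarrow> (\<exists>n. wf_proc D X R L n \<omega> = 0)" for \<omega>
    by (rule LIMSEQ_0_iff_ex_eq_0) (simp add: Dsum_def wf_count_def)
  moreover have "wf_proc D X R L n \<omega> = wf_chain L n (step_vars D X R \<omega>)" if "\<omega> \<in> space M" for n \<omega>
    using X_nonneg R_nonneg that by (intro wf_proc_eq_wf_chain)
  ultimately have "{\<omega> \<in> space M. (\<lambda>n. wf_proc D X R L n \<omega>) \<longlonglongrightarrow> 0}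
      = step_vars D X R -` steps.extinct L \<inter> space M"
    unfolding steps.extinct_def by auto
  moreover have "step_vars D X R \<in> measurable M steps.P"
    using measurable_step_vars by (intro measurable_abs_UNIV) simp
  ultimately have "measure M {\<omega> \<in> space M. (\<lambda>n. wf_proc D X R L n \<omega>) \<longlonglongrightarrow> 0}
      = measure (distr M steps.P (step_vars D X R)) (steps.extinct L)"
    by (simp add: measure_distr)
  then show ?thesis by (simp add: distr_step_vars_seq)
qed

theorem wf_proc_extinction_le_power:
  "measure M {\<omega> \<in> space M. (\<lambda>n. wf_proc D X R L n \<omega>) \<longlonglongrightarrow> 0}
     \<le> measure M {\<omega> \<in> space M. (\<lambda>n. wf_proc D X R 1 n \<omega>) \<longlonglongrightarrow> 0} ^ L"
  unfolding measure_wf_proc_tendsto_0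
proof -
  have "ennreal (measure steps.P (steps.extinct L)) \<le> ennreal (measure steps.P (steps.extinct 1)) ^ L"
    using steps.emeasure_extinct_le_power[of L] unfolding steps.SQ.P.emeasure_eq_measure .
  then show "measure steps.P (steps.extinct L) \<le> measure steps.P (steps.extinct 1) ^ L"
    by (simp add: ennreal_power ennreal_le_iff)
qed

end

theorem mainTheorem3:
  fixes M :: "'a measure"
    and D :: "nat \<Rightarrow> nat \<Rightarrow> 'a \<Rightarrow> nat"
    and X R :: "nat \<Rightarrow> nat \<Rightarrow> 'a \<Rightarrow> real"
    and L :: nat
  assumes ps: "prob_space M"
    and measD: "\<And>n k. D n k \<in> measurable M (count_space UNIV)"
    and measX: "\<And>n k. X n k \<in> borel_measurable M"
    and measR: "\<And>n k. R n k \<in> borel_measurable M"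
    \<comment> \<open>the three arrays are mutually independent, each consisting of independent variables\<close>
    and indep: "prob_space.indep_vars M (\<lambda>_. borel) (all_vars D X R) var_index"
    and identD: "\<And>n k. 1 \<le> k \<Longrightarrow> distr M (count_space UNIV) (D n k) = distr M (count_space UNIV) (D 0 1)"
    and identX: "\<And>n k. 1 \<le> k \<Longrightarrow> distr M borel (X n k) = distr M borel (X 0 1)"
    and identR: "\<And>n k. 1 \<le> k \<Longrightarrow> distr M borel (R n k) = distr M borel (R 0 1)"
    and Xnn: "\<And>n k \<omega>. \<omega> \<in> space M \<Longrightarrow> X n k \<omega> \<ge> 0"
    and Rnn: "\<And>n k \<omega>. \<omega> \<in> space M \<Longrightarrow> R n k \<omega> \<ge> 0"
    \<comment> \<open>X has a continuous distribution function F\<close>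
    and Xcont: "\<And>x. measure M {\<omega> \<in> space M. X 0 1 \<omega> = x} = 0"
    \<comment> \<open>(A4) finite variances (hence finite means)\<close>
    and varD: "integrable M (\<lambda>\<omega>. (real (D 0 1 \<omega>))\<^sup>2)"
    and varX: "integrable M (\<lambda>\<omega>. (X 0 1 \<omega>)\<^sup>2)"
    and varR: "integrable M (\<lambda>\<omega>. (R 0 1 \<omega>)\<^sup>2)"
    \<comment> \<open>(A1) 1 < m < \<infinity>, r < \<infinity>, 0 < \<mu> < \<infinity>\<close>
    and A1m: "integrable M (\<lambda>\<omega>. real (D 0 1 \<omega>)) \<and> 1 < (\<integral>\<omega>. real (D 0 1 \<omega>) \<partial>M)"
    and A1r: "integrable M (R 0 1)"
    and A1mu: "integrable M (X 0 1) \<and> 0 < (\<integral>\<omega>. X 0 1 \<omega> \<partial>M)"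
    \<comment> \<open>(A2)\<close>
    and A2a: "measure M {\<omega> \<in> space M. D 0 1 \<omega> = 0} > 0"
    and A2b: "\<exists>k\<ge>2. measure M {\<omega> \<in> space M. D 0 1 \<omega> = k} > 0"
    \<comment> \<open>(A3) for the wf-process started at 1, every finite positive state is reached w.p.p.\<close>
    and A3: "\<And>j. 1 \<le> j \<Longrightarrow> \<exists>n. measure M {\<omega> \<in> space M. wf_proc D X R 1 n \<omega> = j} > 0"
  shows "measure M {\<omega> \<in> space M. (\<lambda>n. wf_proc D X R L n \<omega>) \<longlonglongrightarrow> 0}
           \<le> (measure M {\<omega> \<in> space M. (\<lambda>n. wf_proc D X R 1 n \<omega>) \<longlonglongrightarrow> 0}) ^ L"
proof -
  interpret wf_arrays M D X R
    by (intro wf_arrays.intro[OF ps] wf_arrays_axioms.intro)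
      (fact measD measX measR indep identD identX identR Xnn Rnn)+
  show ?thesis by (rule wf_proc_extinction_le_power)
qed

end
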